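(* For each $n\ge 3$ there is a bounded non-commutative BCK-algebra $\mathcal B$ of order $n$ with $\operatorname{dnd}(\mathcal B)=\frac2n$.
   Context: A BCK-algebra is a set $A$ with a binary operation $\cdot$ and a constant $0$ such that for all $x,y,z\in A$: (BCK1) $((x\cdot y)\cdot(x\cdot z))\cdot(z\cdot y)=0$; (BCK2) $(x\cdot(x\cdot y))\cdot y=0$; (BCK3) $x\cdot x=0$; (BCK4) $0\cdot x=0$; (BCK5) $x\cdot y=0$ and $y\cdot x=0$ imply $x=y$. Define $x\wedge y:=y\cdot(y\cdot x)$; the algebra is commutative if $x\wedge y=y\wedge x$ for all $x,y$. A bounded BCK-algebra has a distinguished element $1$ with $x\cdot 1=0$ for all $x$; $\neg x:=1\cdot x$. For a finite bounded BCK-algebra $\mathcal A$, the double negation degree is $\operatorname{dnd}(\mathcal A)=|\{x\in\mathcal A:\neg\neg x=x\}|/|\mathcal A|$. The order of a finite algebra is its cardinality. *)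

theory Defs
  imports Complex_Main
begin

definition bck_algebra :: "'a set \<Rightarrow> ('a \<Rightarrow> 'a \<Rightarrow> 'a) \<Rightarrow> 'a \<Rightarrow> bool" where
  "bck_algebra A m z \<longleftrightarrow>
     z \<in> A \<and> (\<forall>x\<in>A. \<forall>y\<in>A. m x y \<in> A) \<and>
     (\<forall>x\<in>A. \<forall>y\<in>A. \<forall>w\<in>A. m (m (m x y) (m x w)) (m w y) = z) \<and>
     (\<forall>x\<in>A. \<forall>y\<in>A. m (m x (m x y)) y = z) \<and>
     (\<forall>x\<in>A. m x x = z) \<and>
     (\<forall>x\<in>A. m z x = z) \<and>
     (\<forall>x\<in>A. \<forall>y\<in>A. m x y = z \<and> m y x = z \<longrightarrow> x = y)"

definition bck_meet :: "('a \<Rightarrow> 'a \<Rightarrow> 'a) \<Rightarrow> 'a \<Rightarrow> 'a \<Rightarrow> 'a" where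
  "bck_meet m x y = m y (m y x)"

definition bck_commutative :: "'a set \<Rightarrow> ('a \<Rightarrow> 'a \<Rightarrow> 'a) \<Rightarrow> bool" where
  "bck_commutative A m \<longleftrightarrow> (\<forall>x\<in>A. \<forall>y\<in>A. bck_meet m x y = bck_meet m y x)"

definition bounded_bck_algebra :: "'a set \<Rightarrow> ('a \<Rightarrow> 'a \<Rightarrow> 'a) \<Rightarrow> 'a \<Rightarrow> 'a \<Rightarrow> bool" where
  "bounded_bck_algebra A m z u \<longleftrightarrow> bck_algebra A m z \<and> u \<in> A \<and> (\<forall>x\<in>A. m x u = z)"

definition bck_neg :: "('a \<Rightarrow> 'a \<Rightarrow> 'a) \<Rightarrow> 'a \<Rightarrow> 'a \<Rightarrow> 'a" where
  "bck_neg m u x = m u x"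

definition dnd :: "'a set \<Rightarrow> ('a \<Rightarrow> 'a \<Rightarrow> 'a) \<Rightarrow> 'a \<Rightarrow> real" where
  "dnd A m u = real (card {x\<in>A. bck_neg m u (bck_neg m u x) = x}) / real (card A)"

end

theory Submission
  imports Defs
begin

text \<open>On a bounded chain, \<open>x \<cdot> y = 0\<close> for \<open>x \<le> y\<close> and \<open>x \<cdot> y = x\<close> otherwise is a bounded
  BCK-algebra. Its meet \<open>x \<and> y\<close> is \<open>0\<close> for \<open>x < y\<close> but \<open>y\<close> for \<open>y < x\<close>, so any two elements
  above \<open>0\<close> witness non-commutativity, and \<open>\<not>x\<close> is \<open>0\<close> for \<open>x = 1\<close> and \<open>1\<close> otherwise,
  so only \<open>0\<close> and \<open>1\<close> are fixed by double negation.\<close>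

definition chain_bck :: "'a::linorder \<Rightarrow> 'a \<Rightarrow> 'a \<Rightarrow> 'a" where
  "chain_bck z x y = (if x \<le> y then z else x)"

lemma bck_algebra_chain_bck:
  assumes "z \<in> A" and "\<forall>x\<in>A. z \<le> x"
  shows "bck_algebra A (chain_bck z) z"
  using assms unfolding bck_algebra_def chain_bck_def by auto

lemma bounded_bck_algebra_chain_bck:
  assumes "z \<in> A" and "u \<in> A" and "\<forall>x\<in>A. z \<le> x \<and> x \<le> u"
  shows "bounded_bck_algebra A (chain_bck z) z u"
  using assms bck_algebra_chain_bck unfolding bounded_bck_algebra_def chain_bck_def by auto

lemma chain_bck_not_commutative:
  assumes "a \<in> A" and "b \<in> A" and "z < a" and "a < b"
  shows "\<not> bck_commutative A (chain_bck z)"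
proof
  assume "bck_commutative A (chain_bck z)"
  then have "bck_meet (chain_bck z) a b = bck_meet (chain_bck z) b a"
    using assms(1,2) unfolding bck_commutative_def by blast
  then show False
    using assms(3,4) by (auto simp: bck_meet_def chain_bck_def split: if_splits)
qed

lemma chain_bck_double_negation_fixed:
  assumes "z \<in> A" and "u \<in> A" and "\<forall>x\<in>A. z \<le> x \<and> x \<le> u"
  shows "{x\<in>A. bck_neg (chain_bck z) u (bck_neg (chain_bck z) u x) = x} = {z, u}"
  using assms by (auto simp: bck_neg_def chain_bck_def)

lemma dnd_chain_bck:
  assumes "z \<in> A" and "u \<in> A" and "\<forall>x\<in>A. z \<le> x \<and> x \<le> u" and "z \<noteq> u"
  shows "dnd A (chain_bck z) u = 2 / real (card A)"
  using assms by (simp add: dnd_def chain_bck_double_negation_fixed)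

theorem theorem4p4:
  fixes n :: nat
  assumes "n \<ge> 3"
  shows "\<exists>(B :: nat set) m z u. bounded_bck_algebra B m z u \<and> finite B \<and> card B = n
           \<and> \<not> bck_commutative B m \<and> dnd B m u = 2 / real n"
proof (intro exI conjI)
  let ?B = "{0..<n}"
  have bounds: "0 \<in> ?B" "n - 1 \<in> ?B" "\<forall>x\<in>?B. 0 \<le> x \<and> x \<le> n - 1"
    using assms by auto
  show "bounded_bck_algebra ?B (chain_bck 0) 0 (n - 1)"
    using bounded_bck_algebra_chain_bck[OF bounds] .
  show "finite ?B" and "card ?B = n"
    by simp_all
  show "\<not> bck_commutative ?B (chain_bck 0)"
    by (rule chain_bck_not_commutative[of 1 _ 2]) (use assms in auto)
  show "dnd ?B (chain_bck 0) (n - 1) = 2 / real n"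
    using dnd_chain_bck[OF bounds] assms by simp
qed

end
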